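(* Let $C$ be a Reedy category and let $([n],X)$ be an object of $\int N^{-,+}(C)$. The following are equivalent: (1) $([n],X)$ is an object of $\int N^{--,+}_+(C)$, i.e. $X$ reflects identities; (2) $\mathrm{id}_{([n],X)}$ is maximal in $\mathrm{Hom}_{\int N^{-,+}(C)}(([n],X),([n],X))$; (3) $\mathrm{id}_{([n],X)}$ is minimal in this hom-poset; (4) $\mathrm{id}_{([n],X)}$ is the largest element of its equivalence class; (5) the equivalence class of $\mathrm{id}_{([n],X)}$ is a singleton.
   Context: A Reedy category $(C,C_-,C_+)$: wide subcategories with unique factorization of every morphism as ($C_-$ then $C_+$), membership in $C_\pm$ decidable, and the relation ($x<'y$ iff non-identity $x\to y$ in $C_+$ or non-identity $y\to x$ in $C_-$) well-founded. $\Delta$: finite ordinals $[n]$ and order-preserving maps. $\int N^{-,+}(C)$: objects $([n],X)$ with $X\colon[n]\to C$ a functor sending all morphisms into $C_-$; morphisms $([m],X)\to([n],Y)$ are $(\alpha,\theta)$ with $\alpha\colon[m]\to[n]$ in $\Delta$ and $\theta\colon X\Rightarrow Y\circ\alpha$ with all components in $C_+$; composition $(\beta,\varphi)\circ(\alpha,\theta)=(\beta\alpha,(\varphi\alpha)\circ\theta)$. $\int N^{--,+}_+(C)$: subcategory on objects whose $X$ reflects identities ($X(i\le j)$ an identity implies $i=j$) and morphisms with $\alpha$ injective. Order on hom-sets: $(\alpha,\theta)\le(\alpha',\theta')$ iff $\alpha\le\alpha'$ pointwise and $\theta'_i=Y(\alpha(i)\le\alpha'(i))\circ\theta_i$ for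 all $i$; equivalence is the equivalence relation generated by $\le$. *)

theory Defs
  imports Main "HOL-Library.FuncSet"
begin

record ('o, 'm) cat =
  Obj  :: "'o set"
  Arr  :: "'m set"
  Dom  :: "'m \<Rightarrow> 'o"
  Cod  :: "'m \<Rightarrow> 'o"
  Id   :: "'o \<Rightarrow> 'm"
  Comp :: "'m \<Rightarrow> 'm \<Rightarrow> 'm"   (* Comp C g f = g \<circ> f *)

definition category :: "('o, 'm) cat \<Rightarrow> bool" where
  "category C \<longleftrightarrow>
     (\<forall>x\<in>Obj C. Id C x \<in> Arr C \<and> Dom C (Id C x) = x \<and> Cod C (Id C x) = x) \<and>
     (\<forall>f\<in>Arr C. Dom C f \<in> Obj C \<and> Cod C f \<in> Obj C) \<and>
     (\<forall>f\<in>Arr C. \<forall>g\<in>Arr C. Cod C f = Dom C g \<longrightarrow>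
         Comp C g f \<in> Arr C \<and> Dom C (Comp C g f) = Dom C f \<and> Cod C (Comp C g f) = Cod C g) \<and>
     (\<forall>f\<in>Arr C. Comp C f (Id C (Dom C f)) = f \<and> Comp C (Id C (Cod C f)) f = f) \<and>
     (\<forall>f\<in>Arr C. \<forall>g\<in>Arr C. \<forall>h\<in>Arr C. Cod C f = Dom C g \<and> Cod C g = Dom C h \<longrightarrow>
         Comp C h (Comp C g f) = Comp C (Comp C h g) f)"

definition wide_subcat :: "('o, 'm) cat \<Rightarrow> 'm set \<Rightarrow> bool" where
  "wide_subcat C S \<longleftrightarrow> S \<subseteq> Arr C \<and> (\<forall>x\<in>Obj C. Id C x \<in> S) \<and>
     (\<forall>f\<in>S. \<forall>g\<in>S. Cod C f = Dom C g \<longrightarrow> Comp C g f \<in> S)"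

text \<open>The relation x <' y of a Reedy structure (pairs (x,y) with x <' y).\<close>
definition reedy_rel :: "('o, 'm) cat \<Rightarrow> 'm set \<Rightarrow> 'm set \<Rightarrow> ('o \<times> 'o) set" where
  "reedy_rel C Cm Cp = {(x, y). x \<in> Obj C \<and> y \<in> Obj C \<and>
      ((\<exists>f\<in>Cp. Dom C f = x \<and> Cod C f = y \<and> f \<noteq> Id C x) \<or>
       (\<exists>f\<in>Cm. Dom C f = y \<and> Cod C f = x \<and> f \<noteq> Id C y))}"

text \<open>Reedy category (C, C_-, C_+). Decidability of membership is automatic in HOL.\<close>
definition reedy :: "('o, 'm) cat \<Rightarrow> 'm set \<Rightarrow> 'm set \<Rightarrow> bool" where
  "reedy C Cm Cp \<longleftrightarrow> category C \<and> wide_subcat C Cm \<and> wide_subcat C Cp \<and>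
     (\<forall>f\<in>Arr C. \<exists>!gh. fst gh \<in> Cm \<and> snd gh \<in> Cp \<and> Cod C (fst gh) = Dom C (snd gh) \<and>
                      Comp C (snd gh) (fst gh) = f) \<and>
     wf (reedy_rel C Cm Cp)"

text \<open>An object ([n],X): X is given by its object part Xo (on 0..n) and its
  morphism part Xm i j = X(i \<le> j) for i \<le> j \<le> n.\<close>
definition nerve_obj :: "('o, 'm) cat \<Rightarrow> 'm set \<Rightarrow> nat \<Rightarrow> (nat \<Rightarrow> 'o) \<Rightarrow> (nat \<Rightarrow> nat \<Rightarrow> 'm) \<Rightarrow> bool" where
  "nerve_obj C Cm n Xo Xm \<longleftrightarrow>
     (\<forall>i\<le>n. Xo i \<in> Obj C) \<and>
     (\<forall>i j. i \<le> j \<and> j \<le> n \<longrightarrow>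
        Xm i j \<in> Arr C \<and> Dom C (Xm i j) = Xo i \<and> Cod C (Xm i j) = Xo j \<and> Xm i j \<in> Cm) \<and>
     (\<forall>i\<le>n. Xm i i = Id C (Xo i)) \<and>
     (\<forall>i j k. i \<le> j \<and> j \<le> k \<and> k \<le> n \<longrightarrow> Comp C (Xm j k) (Xm i j) = Xm i k)"

definition reflects_identities :: "('o, 'm) cat \<Rightarrow> nat \<Rightarrow> (nat \<Rightarrow> 'o) \<Rightarrow> (nat \<Rightarrow> nat \<Rightarrow> 'm) \<Rightarrow> bool" where
  "reflects_identities C n Xo Xm \<longleftrightarrow>
     (\<forall>i j. i \<le> j \<and> j \<le> n \<and> Xm i j = Id C (Xo i) \<longrightarrow> i = j)"

definition nerve_hom :: "('o, 'm) cat \<Rightarrow> 'm set \<Rightarrow>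
    nat \<Rightarrow> (nat \<Rightarrow> 'o) \<Rightarrow> (nat \<Rightarrow> nat \<Rightarrow> 'm) \<Rightarrow>
    nat \<Rightarrow> (nat \<Rightarrow> 'o) \<Rightarrow> (nat \<Rightarrow> nat \<Rightarrow> 'm) \<Rightarrow> ((nat \<Rightarrow> nat) \<times> (nat \<Rightarrow> 'm)) set" where
  "nerve_hom C Cp m Xo Xm n Yo Ym = {(\<alpha>, \<theta>).
     \<alpha> \<in> extensional {..m} \<and> \<theta> \<in> extensional {..m} \<and>
     (\<forall>i\<le>m. \<alpha> i \<le> n) \<and>
     (\<forall>i j. i \<le> j \<and> j \<le> m \<longrightarrow> \<alpha> i \<le> \<alpha> j) \<and>
     (\<forall>i\<le>m. \<theta> i \<in> Arr C \<and> \<theta> i \<in> Cp \<and> Dom C (\<theta> i) = Xo i \<and> Cod C (\<theta> i) = Yo (\<alpha> i)) \<and>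
     (\<forall>i j. i \<le> j \<and> j \<le> m \<longrightarrow> Comp C (Ym (\<alpha> i) (\<alpha> j)) (\<theta> i) = Comp C (\<theta> j) (Xm i j))}"

definition nerve_id :: "('o, 'm) cat \<Rightarrow> nat \<Rightarrow> (nat \<Rightarrow> 'o) \<Rightarrow> (nat \<Rightarrow> nat) \<times> (nat \<Rightarrow> 'm)" where
  "nerve_id C n Xo = ((\<lambda>i\<in>{..n}. i), (\<lambda>i\<in>{..n}. Id C (Xo i)))"

definition nerve_le :: "('o, 'm) cat \<Rightarrow> nat \<Rightarrow> (nat \<Rightarrow> nat \<Rightarrow> 'm) \<Rightarrow>
    (nat \<Rightarrow> nat) \<times> (nat \<Rightarrow> 'm) \<Rightarrow> (nat \<Rightarrow> nat) \<times> (nat \<Rightarrow> 'm) \<Rightarrow> bool" where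
  "nerve_le C m Ym f g \<longleftrightarrow>
     (\<forall>i\<le>m. fst f i \<le> fst g i \<and> snd g i = Comp C (Ym (fst f i) (fst g i)) (snd f i))"

definition equiv_class_gen :: "'a set \<Rightarrow> ('a \<Rightarrow> 'a \<Rightarrow> bool) \<Rightarrow> 'a \<Rightarrow> 'a set" where
  "equiv_class_gen H le f =
     (let R = {(a, b). a \<in> H \<and> b \<in> H \<and> le a b} in {g \<in> H. (f, g) \<in> (R \<union> R\<inverse>)\<^sup>*})"

end

theory Submission
  imports Defs
begin

text \<open>
  If the identity is below or above (\<alpha>, \<theta>), then each component \<theta> i is composed with an
  arrow X(i \<le> \<alpha> i) or X(\<alpha> i \<le> i) of C-; uniqueness of Reedy factorizations forces these
  arrows to be identities (for f \<le> id by induction on i, using naturality of \<theta> at \<alpha> i \<le> i),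
  so when X reflects identities, (\<alpha>, \<theta>) is the identity.
  Conversely, if X(i \<le> j) is an identity for some i < j, then X(i \<le> i + 1) is one as well,
  since otherwise X(i \<le> i + 1) and X(i + 1 \<le> j) would form a cycle for the well-founded
  relation <'. The two maps of [n] identifying i with i + 1 then leave X unchanged and, with
  identity components, give endomorphisms strictly above and strictly below the identity.
  The statements about the equivalence class follow, since \<le> is antisymmetric.
\<close>

lemma equiv_class_gen_eq_singleton:
  assumes "e \<in> H" and "\<And>f. f \<in> H \<Longrightarrow> le e f \<or> le f e \<Longrightarrow> f = e"
  shows "equiv_class_gen H le e = {e}"
proof -
  let ?R = "{(a, b). a \<in> H \<and> b \<in> H \<and> le a b}"
  have "f = e" if "(e, f) \<in> (?R \<union> ?R\<inverse>)\<^sup>*" for f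
    using that by (induction rule: rtrancl_induct) (auto dest: assms(2))
  then show ?thesis
    using assms(1) by (auto simp: equiv_class_gen_def Let_def)
qed

lemma equiv_class_gen_memI:
  "e \<in> H \<Longrightarrow> f \<in> H \<Longrightarrow> le e f \<Longrightarrow> f \<in> equiv_class_gen H le e"
  by (auto simp: equiv_class_gen_def Let_def intro!: r_into_rtrancl)

lemma nerve_hom_eqI:
  assumes "f \<in> nerve_hom C Cp m Xo Xm n Yo Ym" "g \<in> nerve_hom C Cp m Xo Xm n Yo Ym"
    and "\<And>i. i \<le> m \<Longrightarrow> fst f i = fst g i" "\<And>i. i \<le> m \<Longrightarrow> snd f i = snd g i"
  shows "f = g"
proof -
  have "fst f = fst g" "snd f = snd g"
    using assms by (auto simp: nerve_hom_def split: prod.splits intro!: extensionalityI)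
  then show ?thesis
    by (simp add: prod_eq_iff)
qed

locale reedy_category =
  fixes C :: "('o, 'm) cat" and Cm Cp :: "'m set"
  assumes reedy: "reedy C Cm Cp"
begin

lemma category: "category C"
  using reedy by (simp add: reedy_def)

lemma wf_reedy_rel: "wf (reedy_rel C Cm Cp)"
  using reedy by (simp add: reedy_def)

lemma Id_in_Arr [simp]: "x \<in> Obj C \<Longrightarrow> Id C x \<in> Arr C"
  and Dom_Id [simp]: "x \<in> Obj C \<Longrightarrow> Dom C (Id C x) = x"
  and Cod_Id [simp]: "x \<in> Obj C \<Longrightarrow> Cod C (Id C x) = x"
  and Dom_in_Obj [simp]: "f \<in> Arr C \<Longrightarrow> Dom C f \<in> Obj C"
  and Cod_in_Obj [simp]: "f \<in> Arr C \<Longrightarrow> Cod C f \<in> Obj C"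
  using category by (simp_all add: category_def)

lemma comp_in_Arr [simp]: "f \<in> Arr C \<Longrightarrow> g \<in> Arr C \<Longrightarrow> Cod C f = Dom C g \<Longrightarrow> Comp C g f \<in> Arr C"
  and Dom_comp [simp]: "f \<in> Arr C \<Longrightarrow> g \<in> Arr C \<Longrightarrow> Cod C f = Dom C g \<Longrightarrow> Dom C (Comp C g f) = Dom C f"
  and Cod_comp [simp]: "f \<in> Arr C \<Longrightarrow> g \<in> Arr C \<Longrightarrow> Cod C f = Dom C g \<Longrightarrow> Cod C (Comp C g f) = Cod C g"
  using category by (simp_all add: category_def)

lemma comp_Id_right [simp]: "f \<in> Arr C \<Longrightarrow> Dom C f = x \<Longrightarrow> Comp C f (Id C x) = f"
  and comp_Id_left [simp]: "f \<in> Arr C \<Longrightarrow> Cod C f = x \<Longrightarrow> Comp C (Id C x) f = f"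
  using category by (auto simp: category_def)

lemma Cm_sub_Arr: "f \<in> Cm \<Longrightarrow> f \<in> Arr C"
  and Cp_sub_Arr: "f \<in> Cp \<Longrightarrow> f \<in> Arr C"
  and Id_in_Cm: "x \<in> Obj C \<Longrightarrow> Id C x \<in> Cm"
  and Id_in_Cp: "x \<in> Obj C \<Longrightarrow> Id C x \<in> Cp"
  using reedy by (auto simp: reedy_def wide_subcat_def)

lemma factorization_unique:
  assumes "a \<in> Cm" "b \<in> Cp" "Cod C a = Dom C b"
    and "a' \<in> Cm" "b' \<in> Cp" "Cod C a' = Dom C b'"
    and "Comp C b a = Comp C b' a'"
  shows "a = a' \<and> b = b'"
proof -
  have "Comp C b a \<in> Arr C"
    using assms by (simp add: Cm_sub_Arr Cp_sub_Arr)
  then have "\<exists>!gh. fst gh \<in> Cm \<and> snd gh \<in> Cp \<and> Cod C (fst gh) = Dom C (snd gh) \<and>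
                   Comp C (snd gh) (fst gh) = Comp C b a"
    using reedy by (simp add: reedy_def)
  then have "(a, b) = (a', b')"
    using assms by (metis fst_conv snd_conv)
  then show ?thesis
    by simp
qed

lemma Cm_Cp_eq_Id:
  assumes "f \<in> Cm" "f \<in> Cp"
  shows "f = Id C (Dom C f)"
proof -
  have f: "f \<in> Arr C"
    using assms(1) by (rule Cm_sub_Arr)
  have "Comp C f (Id C (Dom C f)) = Comp C (Id C (Cod C f)) f"
    using f by simp
  then show ?thesis
    using factorization_unique[of "Id C (Dom C f)" f f "Id C (Cod C f)"] f assms
    by (simp add: Id_in_Cm Id_in_Cp)
qed

lemma Cm_section_of_Cp_eq_Id:
  assumes "f \<in> Cm" "g \<in> Cp" "Cod C f = Dom C g" "Comp C g f = Id C (Dom C f)"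
  shows "f = Id C (Dom C f)"
proof -
  have x: "Dom C f \<in> Obj C"
    using assms(1) by (simp add: Cm_sub_Arr)
  then have "Comp C g f = Comp C (Id C (Dom C f)) (Id C (Dom C f))"
    using assms(4) by simp
  then show ?thesis
    using factorization_unique[of f g "Id C (Dom C f)" "Id C (Dom C f)"] assms x
    by (simp add: Id_in_Cm Id_in_Cp)
qed

lemma Cm_section_of_Cm_eq_Id:
  assumes f: "f \<in> Cm" and g: "g \<in> Cm" and "Cod C f = Dom C g" "Comp C g f = Id C (Dom C f)"
  shows "f = Id C (Dom C f)"
proof (rule ccontr)
  \<comment> \<open>Otherwise f and g are non-identity arrows of C- forming a cycle of length two for <'.\<close>
  assume f_ne: "f \<noteq> Id C (Dom C f)"
  have arr: "f \<in> Arr C" "g \<in> Arr C"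
    using f g by (simp_all add: Cm_sub_Arr)
  have Cod_g: "Cod C g = Dom C f"
    using arr assms by (metis Cod_Id Cod_comp Dom_in_Obj)
  have g_ne: "g \<noteq> Id C (Dom C g)"
    using arr assms f_ne comp_Id_left by metis
  have "(Dom C f, Cod C f) \<in> reedy_rel C Cm Cp"
    using g g_ne Cod_g arr assms(3) unfolding reedy_rel_def by auto
  moreover have "(Cod C f, Dom C f) \<in> reedy_rel C Cm Cp"
    using f f_ne arr unfolding reedy_rel_def by auto
  ultimately show False
    using wf_not_sym[OF wf_reedy_rel] by blast
qed

lemma nerve_le_refl:
  assumes Y: "nerve_obj C Cm n Yo Ym" and f: "f \<in> nerve_hom C Cp m Xo Xm n Yo Ym"
  shows "nerve_le C m Ym f f"
  unfolding nerve_le_def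
proof (intro allI impI conjI order.refl)
  fix i assume "i \<le> m"
  then show "snd f i = Comp C (Ym (fst f i) (fst f i)) (snd f i)"
    using Y f by (auto simp: nerve_obj_def nerve_hom_def)
qed

lemma nerve_le_antisym:
  assumes Y: "nerve_obj C Cm n Yo Ym"
    and f: "f \<in> nerve_hom C Cp m Xo Xm n Yo Ym" and g: "g \<in> nerve_hom C Cp m Xo Xm n Yo Ym"
    and "nerve_le C m Ym f g" "nerve_le C m Ym g f"
  shows "f = g"
proof (rule nerve_hom_eqI[OF f g])
  fix i assume i: "i \<le> m"
  then show fst_eq: "fst f i = fst g i"
    using assms(4,5) by (simp add: nerve_le_def order.antisym)
  have "snd g i = Comp C (Ym (fst f i) (fst f i)) (snd f i)"
    using assms(4) i fst_eq by (simp add: nerve_le_def)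
  then show "snd f i = snd g i"
    using Y f i by (auto simp: nerve_obj_def nerve_hom_def)
qed

end

definition collapse_down :: "nat \<Rightarrow> nat \<Rightarrow> nat" where
  "collapse_down i k = (if k = Suc i then i else k)"

definition collapse_up :: "nat \<Rightarrow> nat \<Rightarrow> nat" where
  "collapse_up i k = (if k = i then Suc i else k)"

lemma collapse_down_collapse_up: "collapse_down i (collapse_up i k) = collapse_down i k"
  by (simp add: collapse_down_def collapse_up_def)

locale reedy_nerve_obj = reedy_category +
  fixes n :: nat and Xo :: "nat \<Rightarrow> 'o" and Xm :: "nat \<Rightarrow> nat \<Rightarrow> 'm"
  assumes nerve_obj: "nerve_obj C Cm n Xo Xm"
begin

abbreviation End where "End \<equiv> nerve_hom C Cp n Xo Xm n Xo Xm"
abbreviation idX where "idX \<equiv> nerve_id C n Xo"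
abbreviation leX where "leX \<equiv> nerve_le C n Xm"

lemma Xo_in_Obj [simp]: "i \<le> n \<Longrightarrow> Xo i \<in> Obj C"
  and Xm_refl [simp]: "i \<le> n \<Longrightarrow> Xm i i = Id C (Xo i)"
  and Xm_in_Arr [simp]: "i \<le> j \<Longrightarrow> j \<le> n \<Longrightarrow> Xm i j \<in> Arr C"
  and Dom_Xm [simp]: "i \<le> j \<Longrightarrow> j \<le> n \<Longrightarrow> Dom C (Xm i j) = Xo i"
  and Cod_Xm [simp]: "i \<le> j \<Longrightarrow> j \<le> n \<Longrightarrow> Cod C (Xm i j) = Xo j"
  and Xm_in_Cm: "i \<le> j \<Longrightarrow> j \<le> n \<Longrightarrow> Xm i j \<in> Cm"
  and Xm_trans: "i \<le> j \<Longrightarrow> j \<le> k \<Longrightarrow> k \<le> n \<Longrightarrow> Comp C (Xm j k) (Xm i j) = Xm i k"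
  using nerve_obj by (simp_all add: nerve_obj_def)

lemma Xm_Suc_eq_Id:
  assumes "i < j" "j \<le> n" "Xm i j = Id C (Xo i)"
  shows "Xm i (Suc i) = Id C (Xo i)"
proof -
  have "Comp C (Xm (Suc i) j) (Xm i (Suc i)) = Xm i j"
    using assms(1,2) by (intro Xm_trans) auto
  then have "Comp C (Xm (Suc i) j) (Xm i (Suc i)) = Id C (Dom C (Xm i (Suc i)))"
    using assms by simp
  then have "Xm i (Suc i) = Id C (Dom C (Xm i (Suc i)))"
    using assms(1,2) by (intro Cm_section_of_Cm_eq_Id[of _ "Xm (Suc i) j"]) (simp_all add: Xm_in_Cm)
  then show ?thesis
    using assms(1,2) by simp
qed

lemma reflects_identities_iff_Suc:
  "reflects_identities C n Xo Xm \<longleftrightarrow> (\<forall>i. Suc i \<le> n \<longrightarrow> Xm i (Suc i) \<noteq> Id C (Xo i))"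
proof
  assume ri: "reflects_identities C n Xo Xm"
  show "\<forall>i. Suc i \<le> n \<longrightarrow> Xm i (Suc i) \<noteq> Id C (Xo i)"
  proof (intro allI impI notI)
    fix i assume "Suc i \<le> n" "Xm i (Suc i) = Id C (Xo i)"
    then have "i = Suc i"
      using ri[unfolded reflects_identities_def, rule_format, of i "Suc i"] by simp
    then show False
      by simp
  qed
next
  assume no_Suc: "\<forall>i. Suc i \<le> n \<longrightarrow> Xm i (Suc i) \<noteq> Id C (Xo i)"
  show "reflects_identities C n Xo Xm"
    unfolding reflects_identities_def
  proof (intro allI impI)
    fix i j assume ij: "i \<le> j \<and> j \<le> n \<and> Xm i j = Id C (Xo i)"
    show "i = j"
    proof (rule ccontr)
      assume "i \<noteq> j"
      then have "Xm i (Suc i) = Id C (Xo i)" "Suc i \<le> n"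
        using ij Xm_Suc_eq_Id[of i j] by auto
      then show False
        using no_Suc by blast
    qed
  qed
qed

lemma idX_in_End: "idX \<in> End"
proof -
  have "Comp C (Xm i j) (Id C (Xo i)) = Comp C (Id C (Xo j)) (Xm i j)" if "i \<le> j" "j \<le> n" for i j
    using that by simp
  then show ?thesis
    unfolding nerve_hom_def nerve_id_def by (simp add: Id_in_Cp)
qed

lemma fst_idX [simp]: "i \<le> n \<Longrightarrow> fst idX i = i"
  and snd_idX [simp]: "i \<le> n \<Longrightarrow> snd idX i = Id C (Xo i)"
  by (simp_all add: nerve_id_def)

lemma End_memD:
  assumes "f \<in> End" "i \<le> n"
  shows "fst f i \<le> n" "snd f i \<in> Arr C" "snd f i \<in> Cp"
    and "Dom C (snd f i) = Xo i" "Cod C (snd f i) = Xo (fst f i)"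
  using assms by (cases f; simp add: nerve_hom_def)+

lemma End_natural:
  "f \<in> End \<Longrightarrow> i \<le> j \<Longrightarrow> j \<le> n \<Longrightarrow>
    Comp C (Xm (fst f i) (fst f j)) (snd f i) = Comp C (snd f j) (Xm i j)"
  by (cases f) (simp add: nerve_hom_def)

lemma eq_idX_if_above_idX:
  assumes ri: "reflects_identities C n Xo Xm" and f: "f \<in> End" "leX idX f"
  shows "f = idX"
proof (rule nerve_hom_eqI[OF f(1) idX_in_End])
  fix i assume i: "i \<le> n"
  have above: "i \<le> fst f i" "snd f i = Comp C (Xm i (fst f i)) (Id C (Xo i))"
    using f(2) i by (simp_all add: nerve_le_def)
  with i have "snd f i = Xm i (fst f i)"
    using End_memD[OF f(1) i] by simp
  then have "Xm i (fst f i) = Id C (Xo i)"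
    using Cm_Cp_eq_Id[of "Xm i (fst f i)"] Xm_in_Cm End_memD[OF f(1) i] above(1) by simp
  then show "fst f i = fst idX i"
    using ri[unfolded reflects_identities_def, rule_format, of i "fst f i"] End_memD[OF f(1) i] above(1) i
    by simp
  with \<open>snd f i = Xm i (fst f i)\<close> show "snd f i = snd idX i"
    using i by simp
qed

lemma eq_idX_if_below_idX:
  assumes ri: "reflects_identities C n Xo Xm" and f: "f \<in> End" "leX f idX"
  shows "f = idX"
proof -
  have below: "fst f i \<le> i" "Comp C (Xm (fst f i) i) (snd f i) = Id C (Xo i)" if "i \<le> n" for i
    using f(2) that by (simp_all add: nerve_le_def)
  have snd_eq_Id_if_fixed: "snd f i = Id C (Xo i)" if i: "i \<le> n" "fst f i = i" for i
    using below(2)[OF i(1)] End_memD[OF f(1) i(1)] i by simp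
  have fixed: "fst f k = k" if "k \<le> n" for k
    using that
  proof (induction k rule: less_induct)
    case (less k)
    define j where "j = fst f k"
    have j: "j \<le> k" "j \<le> n"
      using below(1)[OF less.prems] less.prems by (simp_all add: j_def)
    show ?case
    proof (rule ccontr)
      \<comment> \<open>Naturality at j \<le> k, with \<theta> j the identity by induction, makes X(j \<le> k) a section of \<theta> k.\<close>
      assume "fst f k \<noteq> k"
      then have "j < k"
        using j by (simp add: j_def)
      then have "fst f j = j"
        using less.IH j(2) by blast
      then have "Comp C (snd f k) (Xm j k) = Id C (Xo j)"
        using End_natural[OF f(1) j(1) less.prems] snd_eq_Id_if_fixed[OF j(2)] j
        by (simp add: j_def)
      then have "Xm j k = Id C (Xo j)"
        using Cm_section_of_Cp_eq_Id[of "Xm j k" "snd f k"] Xm_in_Cm End_memD[OF f(1) less.prems] j less.prems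
        by (simp add: j_def)
      then have "j = k"
        using ri[unfolded reflects_identities_def, rule_format, of j k] j less.prems by simp
      with \<open>j < k\<close> show False
        by simp
    qed
  qed
  show ?thesis
    by (rule nerve_hom_eqI[OF f(1) idX_in_End]) (simp_all add: fixed snd_eq_Id_if_fixed)
qed

definition reindex :: "(nat \<Rightarrow> nat) \<Rightarrow> (nat \<Rightarrow> nat) \<times> (nat \<Rightarrow> 'm)" where
  "reindex \<gamma> = (restrict \<gamma> {..n}, snd idX)"

lemma reindex_in_End:
  assumes range: "\<And>k. k \<le> n \<Longrightarrow> \<gamma> k \<le> n"
    and mono: "\<And>a b. a \<le> b \<Longrightarrow> b \<le> n \<Longrightarrow> \<gamma> a \<le> \<gamma> b"
    and Xm_\<gamma>: "\<And>a b. a \<le> b \<Longrightarrow> b \<le> n \<Longrightarrow> Xm (\<gamma> a) (\<gamma> b) = Xm a b"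
  shows "reindex \<gamma> \<in> End"
proof -
  have Xo_\<gamma>: "Xo (\<gamma> k) = Xo k" if "k \<le> n" for k
  proof -
    have "Dom C (Xm (\<gamma> k) (\<gamma> k)) = Dom C (Xm k k)"
      using Xm_\<gamma>[of k k] that by simp
    then show ?thesis
      using range that by simp
  qed
  have "Comp C (Xm (\<gamma> i) (\<gamma> j)) (Id C (Xo i)) = Comp C (Id C (Xo j)) (Xm i j)"
    if "i \<le> j" "j \<le> n" for i j
    using that Xm_\<gamma> by simp
  then show ?thesis
    unfolding reindex_def nerve_hom_def nerve_id_def using range mono Xo_\<gamma> by (simp add: Id_in_Cp)
qed

lemma Xo_Suc_eq:
  assumes "Suc i \<le> n" "Xm i (Suc i) = Id C (Xo i)"
  shows "Xo (Suc i) = Xo i"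
  using Cod_Xm[of i "Suc i"] assms by simp

lemma Xm_collapse_down:
  assumes i: "Suc i \<le> n" "Xm i (Suc i) = Id C (Xo i)" and ab: "a \<le> b" "b \<le> n"
  shows "Xm (collapse_down i a) (collapse_down i b) = Xm a b"
proof -
  note Xo_Suc = Xo_Suc_eq[OF i]
  consider "a = Suc i" "b = Suc i" | "a = Suc i" "Suc i < b" | "a \<le> i" "b = Suc i"
    | "a \<noteq> Suc i" "b \<noteq> Suc i"
    using ab(1) by linarith
  then show ?thesis
  proof cases
    case 1
    then show ?thesis
      using i Xo_Suc by (simp add: collapse_down_def)
  next
    case 2
    have "Xm i b = Comp C (Xm (Suc i) b) (Xm i (Suc i))"
      using Xm_trans[of i "Suc i" b] 2 ab by simp
    also have "\<dots> = Xm (Suc i) b"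
      using i(2) 2 ab Xo_Suc by simp
    finally show ?thesis
      using 2 by (simp add: collapse_down_def)
  next
    case 3
    have "Xm a (Suc i) = Comp C (Xm i (Suc i)) (Xm a i)"
      using Xm_trans[of a i "Suc i"] 3 i(1) by simp
    also have "\<dots> = Xm a i"
      using i 3 by simp
    finally show ?thesis
      using 3 by (simp add: collapse_down_def)
  next
    case 4
    then show ?thesis
      by (simp add: collapse_down_def)
  qed
qed

lemma Xm_collapse_up:
  assumes i: "Suc i \<le> n" "Xm i (Suc i) = Id C (Xo i)" and ab: "a \<le> b" "b \<le> n"
  shows "Xm (collapse_up i a) (collapse_up i b) = Xm a b"
proof -
  have "collapse_up i a \<le> collapse_up i b" "collapse_up i b \<le> n"
    using ab i(1) by (auto simp: collapse_up_def)
  then have "Xm (collapse_up i a) (collapse_up i b) = Xm (collapse_down i a) (collapse_down i b)"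
    using Xm_collapse_down[OF i, symmetric] by (simp only: collapse_down_collapse_up)
  also have "\<dots> = Xm a b"
    using Xm_collapse_down[OF i ab] .
  finally show ?thesis .
qed

lemma reindex_collapse_up_above_idX:
  assumes i: "Suc i \<le> n" "Xm i (Suc i) = Id C (Xo i)"
  shows "reindex (collapse_up i) \<in> End" "leX idX (reindex (collapse_up i))"
    and "reindex (collapse_up i) \<noteq> idX"
proof -
  show "reindex (collapse_up i) \<in> End"
    using i Xm_collapse_up[OF i] by (intro reindex_in_End) (auto simp: collapse_up_def)
  have "Xm k (collapse_up i k) = Id C (Xo k)" if "k \<le> n" for k
    using i that by (simp add: collapse_up_def)
  then show "leX idX (reindex (collapse_up i))"
    by (simp add: nerve_le_def reindex_def collapse_up_def)
  have "fst (reindex (collapse_up i)) i \<noteq> fst idX i"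
    using i(1) by (simp add: reindex_def collapse_up_def)
  then show "reindex (collapse_up i) \<noteq> idX"
    by metis
qed

lemma reindex_collapse_down_below_idX:
  assumes i: "Suc i \<le> n" "Xm i (Suc i) = Id C (Xo i)"
  shows "reindex (collapse_down i) \<in> End" "leX (reindex (collapse_down i)) idX"
    and "reindex (collapse_down i) \<noteq> idX"
proof -
  show "reindex (collapse_down i) \<in> End"
    using i Xm_collapse_down[OF i] by (intro reindex_in_End) (auto simp: collapse_down_def)
  have "Xm (collapse_down i k) k = Id C (Xo k)" if "k \<le> n" for k
    using i Xo_Suc_eq[OF i] that by (simp add: collapse_down_def)
  then show "leX (reindex (collapse_down i)) idX"
    by (simp add: nerve_le_def reindex_def collapse_down_def)
  have "fst (reindex (collapse_down i)) (Suc i) \<noteq> fst idX (Suc i)"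
    using i(1) by (simp add: reindex_def collapse_down_def)
  then show "reindex (collapse_down i) \<noteq> idX"
    by metis
qed

lemma not_reflects_identitiesE:
  assumes "\<not> reflects_identities C n Xo Xm"
  obtains i where "Suc i \<le> n" "Xm i (Suc i) = Id C (Xo i)"
  using assms reflects_identities_iff_Suc by blast

theorem reflects_identities_iff_idX_maximal:
  "reflects_identities C n Xo Xm \<longleftrightarrow> (\<forall>f\<in>End. leX idX f \<longrightarrow> f = idX)"
  using eq_idX_if_above_idX reindex_collapse_up_above_idX not_reflects_identitiesE by metis

theorem reflects_identities_iff_idX_minimal:
  "reflects_identities C n Xo Xm \<longleftrightarrow> (\<forall>f\<in>End. leX f idX \<longrightarrow> f = idX)"
  using eq_idX_if_below_idX reindex_collapse_down_below_idX not_reflects_identitiesE by metis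

theorem reflects_identities_iff_idX_class_singleton:
  "reflects_identities C n Xo Xm \<longleftrightarrow> equiv_class_gen End leX idX = {idX}"
proof
  assume "reflects_identities C n Xo Xm"
  then show "equiv_class_gen End leX idX = {idX}"
    using idX_in_End eq_idX_if_above_idX eq_idX_if_below_idX
    by (intro equiv_class_gen_eq_singleton) blast+
next
  assume singleton: "equiv_class_gen End leX idX = {idX}"
  show "reflects_identities C n Xo Xm"
  proof (rule ccontr)
    assume "\<not> reflects_identities C n Xo Xm"
    then obtain i where "Suc i \<le> n" "Xm i (Suc i) = Id C (Xo i)"
      by (rule not_reflects_identitiesE)
    with singleton show False
      using equiv_class_gen_memI[OF idX_in_End] reindex_collapse_up_above_idX by blast
  qed
qed

theorem reflects_identities_iff_idX_greatest_in_class: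
  "reflects_identities C n Xo Xm \<longleftrightarrow> (\<forall>f\<in>equiv_class_gen End leX idX. leX f idX)"
proof
  assume "reflects_identities C n Xo Xm"
  then show "\<forall>f\<in>equiv_class_gen End leX idX. leX f idX"
    using reflects_identities_iff_idX_class_singleton nerve_le_refl[OF nerve_obj idX_in_End] by simp
next
  assume greatest: "\<forall>f\<in>equiv_class_gen End leX idX. leX f idX"
  show "reflects_identities C n Xo Xm"
  proof (rule ccontr)
    assume "\<not> reflects_identities C n Xo Xm"
    then obtain i where i: "Suc i \<le> n" "Xm i (Suc i) = Id C (Xo i)"
      by (rule not_reflects_identitiesE)
    let ?f = "reindex (collapse_up i)"
    have "leX ?f idX"
      using greatest equiv_class_gen_memI[OF idX_in_End] reindex_collapse_up_above_idX[OF i] by blast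
    then have "?f = idX"
      using nerve_le_antisym[OF nerve_obj] idX_in_End reindex_collapse_up_above_idX[OF i] by blast
    then show False
      using reindex_collapse_up_above_idX[OF i] by blast
  qed
qed

end

theorem lemma5p6:
  fixes C :: "('o, 'm) cat" and Cm Cp :: "'m set"
    and n :: nat and Xo :: "nat \<Rightarrow> 'o" and Xm :: "nat \<Rightarrow> nat \<Rightarrow> 'm"
  assumes "reedy C Cm Cp"
    and "nerve_obj C Cm n Xo Xm"
  defines "H \<equiv> nerve_hom C Cp n Xo Xm n Xo Xm"
    and "e \<equiv> nerve_id C n Xo"
    and "le \<equiv> nerve_le C n Xm"
  shows "(reflects_identities C n Xo Xm \<longleftrightarrow> (\<forall>f\<in>H. le e f \<longrightarrow> f = e))
       \<and> (reflects_identities C n Xo Xm \<longleftrightarrow> (\<forall>f\<in>H. le f e \<longrightarrow> f = e))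
       \<and> (reflects_identities C n Xo Xm \<longleftrightarrow> (\<forall>f\<in>equiv_class_gen H le e. le f e))
       \<and> (reflects_identities C n Xo Xm \<longleftrightarrow> equiv_class_gen H le e = {e})"
proof -
  interpret reedy_nerve_obj C Cm Cp n Xo Xm
    using assms(1,2) by (simp add: reedy_nerve_obj_def reedy_category_def reedy_nerve_obj_axioms_def)
  show ?thesis
    unfolding H_def e_def le_def
    using reflects_identities_iff_idX_maximal reflects_identities_iff_idX_minimal
      reflects_identities_iff_idX_greatest_in_class reflects_identities_iff_idX_class_singleton
    by blast
qed

end
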